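(* Let $k\ge3$, let $G$ be a graph and $L$ a $k$-list assignment for $G$. Let $B$ be a bug in $G$ with root $r$ satisfying $d_G(r)\le k$ and $k+1\le|V(B)|\le 2k$. If $B$ contains two distinct, nonadjacent, hidden vertices, then $B$ is safe in $G$.
   Context: $V_{3^+}(G)$ is the set of vertices of degree at least $3$ in $G$. A bug in $G$ is an induced connected subgraph $B$ together with a vertex $r\in V(B)$, its root, such that $V(B)\cap V_{3^+}(G)\subseteq\{r\}$. A vertex $y\in V(B)$ is hidden if $N_G(y)\subseteq V(B)$. A $k$-list assignment $L$ assigns to each vertex $v$ a set $L(v)$ of exactly $k$ colors; an $L$-coloring is a proper vertex coloring $f$ with $f(v)\in L(v)$. For an integer $n$ and $k\ge1$, $n\bmod^* k$ is the unique $m\in\{1,\dots,k\}$ with $n\equiv m\pmod k$. If $|V(G)|=n\ge 1$, an $L$-coloring $f$ of $G$ is strongly equitable (SE) if every color class has at most $\lceil n/k\rceil$ vertices and the number of colors whose class has exactly $\lceil n/k\rceil$ vertices (the full classes) is at most $n\bmod^* k$; the empty graph is regarded as SE $L$-colorable. A subgraph $S\subseteq G$ is safe in $G$ if every SE $L$-coloring of $G-V(S)$ (with the restriction of $L$) can be extended to an SE $L$-coloring of $G$. *)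

theory Defs
  imports Main
begin

definition graph :: "'a set \<Rightarrow> ('a \<Rightarrow> 'a \<Rightarrow> bool) \<Rightarrow> bool" where
  "graph V E \<longleftrightarrow> finite V \<and> (\<forall>u v. E u v \<longrightarrow> u \<in> V \<and> v \<in> V)
     \<and> (\<forall>u v. E u v \<longrightarrow> E v u) \<and> (\<forall>v. \<not> E v v)"

definition nbhd :: "('a \<Rightarrow> 'a \<Rightarrow> bool) \<Rightarrow> 'a \<Rightarrow> 'a set" where
  "nbhd E v = {u. E v u}"

definition degree :: "('a \<Rightarrow> 'a \<Rightarrow> bool) \<Rightarrow> 'a \<Rightarrow> nat" where
  "degree E v = card (nbhd E v)"

definition V3plus :: "'a set \<Rightarrow> ('a \<Rightarrow> 'a \<Rightarrow> bool) \<Rightarrow> 'a set" where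
  "V3plus V E = {v \<in> V. degree E v \<ge> 3}"

definition induced_connected :: "('a \<Rightarrow> 'a \<Rightarrow> bool) \<Rightarrow> 'a set \<Rightarrow> bool" where
  "induced_connected E S \<longleftrightarrow> S \<noteq> {} \<and>
     (\<forall>u\<in>S. \<forall>v\<in>S. (\<lambda>x y. E x y \<and> x \<in> S \<and> y \<in> S)\<^sup>*\<^sup>* u v)"

definition bug :: "'a set \<Rightarrow> ('a \<Rightarrow> 'a \<Rightarrow> bool) \<Rightarrow> 'a set \<Rightarrow> 'a \<Rightarrow> bool" where
  "bug V E S r \<longleftrightarrow> S \<subseteq> V \<and> induced_connected E S \<and> r \<in> S \<and> S \<inter> V3plus V E \<subseteq> {r}"

definition hidden :: "('a \<Rightarrow> 'a \<Rightarrow> bool) \<Rightarrow> 'a set \<Rightarrow> 'a \<Rightarrow> bool" where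
  "hidden E S y \<longleftrightarrow> y \<in> S \<and> nbhd E y \<subseteq> S"

definition list_assignment :: "'a set \<Rightarrow> nat \<Rightarrow> ('a \<Rightarrow> 'c set) \<Rightarrow> bool" where
  "list_assignment V k L \<longleftrightarrow> (\<forall>v\<in>V. finite (L v) \<and> card (L v) = k)"

definition L_coloring :: "'a set \<Rightarrow> ('a \<Rightarrow> 'a \<Rightarrow> bool) \<Rightarrow> ('a \<Rightarrow> 'c set) \<Rightarrow> ('a \<Rightarrow> 'c) \<Rightarrow> bool" where
  "L_coloring W E L f \<longleftrightarrow> (\<forall>v\<in>W. f v \<in> L v) \<and> (\<forall>u\<in>W. \<forall>v\<in>W. E u v \<longrightarrow> f u \<noteq> f v)"

definition mod_star :: "nat \<Rightarrow> nat \<Rightarrow> nat" where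
  "mod_star n k = (if n mod k = 0 then k else n mod k)"

definition ceil_div :: "nat \<Rightarrow> nat \<Rightarrow> nat" where
  "ceil_div n k = (n + k - 1) div k"

definition color_class :: "'a set \<Rightarrow> ('a \<Rightarrow> 'c) \<Rightarrow> 'c \<Rightarrow> 'a set" where
  "color_class W f c = {v \<in> W. f v = c}"

definition SE_coloring :: "'a set \<Rightarrow> ('a \<Rightarrow> 'a \<Rightarrow> bool) \<Rightarrow> nat \<Rightarrow> ('a \<Rightarrow> 'c set) \<Rightarrow> ('a \<Rightarrow> 'c) \<Rightarrow> bool" where
  "SE_coloring W E k L f \<longleftrightarrow> L_coloring W E L f \<and>
     (W \<noteq> {} \<longrightarrow>
       (\<forall>c. card (color_class W f c) \<le> ceil_div (card W) k) \<and>
       card {c. card (color_class W f c) = ceil_div (card W) k} \<le> mod_star (card W) k)"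

definition safe :: "'a set \<Rightarrow> ('a \<Rightarrow> 'a \<Rightarrow> bool) \<Rightarrow> nat \<Rightarrow> ('a \<Rightarrow> 'c set) \<Rightarrow> 'a set \<Rightarrow> bool" where
  "safe V E k L S \<longleftrightarrow> (\<forall>f. SE_coloring (V - S) E k L f \<longrightarrow>
     (\<exists>g. SE_coloring V E k L g \<and> (\<forall>v\<in>V - S. g v = f v)))"

end

theory Submission
  imports Defs
begin

text \<open>
  Starting from an SE colouring of G - B, the vertices of the bug B are coloured in two rounds:
  first a set T of |B| - k \<le> k vertices, then the remaining k vertices D, each round with
  pairwise distinct colours. Such a rainbow block keeps the colouring strongly equitable provided
  its colours avoid the full classes, which matters only if the block neither completes a multiple
  of k vertices nor has size k. The colours are chosen greedily, vertices with many coloured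
  neighbours first; this succeeds because every non-root vertex of a bug has degree at most 2.
  The two non-adjacent hidden vertices yield a hidden vertex of T, which sees no coloured vertex,
  and a set K \<subseteq> D of at most three vertices near the root that contains a vertex with all its
  neighbours in D and another non-root vertex with a neighbour in D; these provide the slack
  needed in the second round.
\<close>

section \<open>Strongly equitable class sizes\<close>

lemma ceil_div_mult_add:
  assumes "1 \<le> t" "t \<le> k"
  shows "ceil_div (a * k + t) k = Suc a"
proof -
  have "a * k + t + k - 1 = (t - 1) + Suc a * k" using assms by simp
  moreover have "((t - 1) + Suc a * k) div k = Suc a + (t - 1) div k"
    using assms by (intro div_mult_self1) simp
  ultimately show ?thesis unfolding ceil_div_def using assms by simp
qed

lemma mod_star_mult_add:
  assumes "1 \<le> t" "t \<le> k"
  shows "mod_star (a * k + t) k = t"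
  using assms unfolding mod_star_def by (cases "t = k") auto

lemma ceil_div_mult:
  assumes "0 < k"
  shows "ceil_div (a * k) k = a"
proof -
  have "a * k + k - 1 = (k - 1) + a * k" using assms by simp
  moreover have "((k - 1) + a * k) div k = a + (k - 1) div k"
    using assms by (intro div_mult_self1) simp
  ultimately show ?thesis unfolding ceil_div_def using assms by simp
qed

lemma ceil_div_pos: "0 < n \<Longrightarrow> 0 < k \<Longrightarrow> 0 < ceil_div n k"
  unfolding ceil_div_def by (simp add: div_greater_zero_iff)

lemma ceil_div_mod_star_unaligned:
  assumes "0 < k" "n mod k \<noteq> 0"
  shows "ceil_div n k = Suc (n div k)" "mod_star n k = n mod k"
proof -
  have "n = n div k * k + n mod k" "1 \<le> n mod k" "n mod k \<le> k" using assms by auto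
  then show "ceil_div n k = Suc (n div k)" "mod_star n k = n mod k"
    using ceil_div_mult_add mod_star_mult_add by metis+
qed

definition SE_counts :: "nat \<Rightarrow> nat \<Rightarrow> ('c \<Rightarrow> nat) \<Rightarrow> bool" where
  "SE_counts k n cnt \<longleftrightarrow>
     (\<forall>c. cnt c \<le> ceil_div n k) \<and> card {c. cnt c = ceil_div n k} \<le> mod_star n k"

lemma SE_counts_add_rainbow_aligned:
  fixes cnt :: "'c \<Rightarrow> nat"
  assumes k: "0 < k" and n: "n mod k = 0" and bound: "\<forall>c. cnt c \<le> ceil_div n k"
    and C: "finite C" "C \<noteq> {}" "card C \<le> k"
  shows "SE_counts k (n + card C) (\<lambda>c. cnt c + of_bool (c \<in> C))"
proof -
  define a where "a = n div k"
  have "n + card C = a * k + card C" using div_mult_mod_eq[of n k] n by (simp add: a_def)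
  moreover have "1 \<le> card C" using C by (simp add: Suc_le_eq card_gt_0_iff)
  ultimately have Q: "ceil_div (n + card C) k = Suc a" and R: "mod_star (n + card C) k = card C"
    using C(3) ceil_div_mult_add mod_star_mult_add by auto
  have "ceil_div n k = a"
    using ceil_div_mult[OF k, of a] div_mult_mod_eq[of n k] n by (simp add: a_def)
  then have cnt: "cnt c \<le> a" for c using bound by simp
  have "{c. cnt c + of_bool (c \<in> C) = Suc a} \<subseteq> C"
  proof
    fix c assume "c \<in> {c. cnt c + of_bool (c \<in> C) = Suc a}"
    then show "c \<in> C" using cnt[of c] by (cases "c \<in> C") auto
  qed
  then have "card {c. cnt c + of_bool (c \<in> C) = Suc a} \<le> card C" by (rule card_mono[OF C(1)])
  moreover have "cnt c + of_bool (c \<in> C) \<le> Suc a" for c using cnt[of c] by (cases "c \<in> C") auto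
  ultimately show ?thesis unfolding SE_counts_def Q R by blast
qed

lemma SE_counts_add_rainbow_whole:
  fixes cnt :: "'c \<Rightarrow> nat"
  assumes k: "0 < k" and n: "n mod k \<noteq> 0"
    and cnt: "SE_counts k n cnt" "finite {c. cnt c = ceil_div n k}" and C: "finite C" "card C = k"
  shows "SE_counts k (n + card C) (\<lambda>c. cnt c + of_bool (c \<in> C))"
proof -
  define a where "a = n div k"
  have n': "ceil_div n k = Suc a" "mod_star n k = n mod k"
    using ceil_div_mod_star_unaligned[OF k n] by (simp_all add: a_def)
  have "n + card C = Suc a * k + n mod k" using C(2) by (simp add: a_def)
  then have Q: "ceil_div (n + card C) k = Suc (Suc a)" and R: "mod_star (n + card C) k = n mod k"
    using n k ceil_div_mult_add[of "n mod k" k "Suc a"] mod_star_mult_add[of "n mod k" k "Suc a"]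
    by auto
  have le: "cnt c \<le> Suc a" for c using cnt(1) n' unfolding SE_counts_def by simp
  have "{c. cnt c + of_bool (c \<in> C) = Suc (Suc a)} \<subseteq> {c. cnt c = ceil_div n k}"
  proof
    fix c assume "c \<in> {c. cnt c + of_bool (c \<in> C) = Suc (Suc a)}"
    then show "c \<in> {c. cnt c = ceil_div n k}" using le[of c] n' by (cases "c \<in> C") auto
  qed
  then have "card {c. cnt c + of_bool (c \<in> C) = Suc (Suc a)} \<le> mod_star n k"
    using card_mono[OF cnt(2)] cnt(1) unfolding SE_counts_def by (meson le_trans)
  moreover have "cnt c + of_bool (c \<in> C) \<le> Suc (Suc a)" for c using le[of c] by (cases "c \<in> C") auto
  ultimately show ?thesis unfolding SE_counts_def Q R n'(2) by blast
qed

lemma SE_counts_add_rainbow_avoiding: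
  fixes cnt :: "'c \<Rightarrow> nat"
  assumes k: "0 < k" and n: "n mod k \<noteq> 0"
    and cnt: "SE_counts k n cnt" "finite {c. cnt c = ceil_div n k}"
    and C: "finite C" "C \<noteq> {}" "card C \<le> k" and avoid: "\<forall>c\<in>C. cnt c < ceil_div n k"
  shows "SE_counts k (n + card C) (\<lambda>c. cnt c + of_bool (c \<in> C))"
proof -
  define a t where "a = n div k" and "t = n mod k"
  have n': "ceil_div n k = Suc a" "mod_star n k = t" "1 \<le> t" "t < k"
    using ceil_div_mod_star_unaligned[OF k n] n k by (simp_all add: a_def t_def)
  have le: "cnt c + of_bool (c \<in> C) \<le> Suc a" for c
    using cnt(1) avoid n'(1) unfolding SE_counts_def by (cases "c \<in> C") auto
  show ?thesis
  proof (cases "t + card C \<le> k")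
    case True
    have "n + card C = a * k + (t + card C)" by (simp add: a_def t_def)
    then have Q: "ceil_div (n + card C) k = Suc a" and R: "mod_star (n + card C) k = t + card C"
      using True n'(3) ceil_div_mult_add[of "t + card C" k a] mod_star_mult_add[of "t + card C" k a]
      by (auto simp: add.assoc)
    have "{c. cnt c + of_bool (c \<in> C) = Suc a} \<subseteq> {c. cnt c = ceil_div n k} \<union> C"
      using n'(1) by auto
    then have "card {c. cnt c + of_bool (c \<in> C) = Suc a} \<le> card {c. cnt c = ceil_div n k} + card C"
      using card_mono[OF finite_UnI[OF cnt(2) C(1)]] card_Un_le by (meson le_trans)
    then show ?thesis using le cnt(1) n'(2) unfolding SE_counts_def Q R by fastforce
  next
    case False
    \<comment> \<open>the block completes a level, so no colour class reaches the new ceiling\<close>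
    have "n + card C = Suc a * k + (t + card C - k)" using False by (simp add: a_def t_def)
    then have Q: "ceil_div (n + card C) k = Suc (Suc a)"
      using False n'(4) C(3) ceil_div_mult_add[of "t + card C - k" k "Suc a"]
      by (simp add: add.assoc)
    have "{c. cnt c + of_bool (c \<in> C) = Suc (Suc a)} = {}"
    proof -
      have False if "cnt c + of_bool (c \<in> C) = Suc (Suc a)" for c using that le[of c] by simp
      then show ?thesis by blast
    qed
    moreover have "cnt c + of_bool (c \<in> C) \<le> Suc (Suc a)" for c using le[of c] by linarith
    ultimately show ?thesis unfolding SE_counts_def Q by simp
  qed
qed

lemma SE_counts_add_rainbow:
  fixes cnt :: "'c \<Rightarrow> nat"
  assumes k: "0 < k" and bound: "\<forall>c. cnt c \<le> ceil_div n k"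
    and cnt: "n mod k \<noteq> 0 \<Longrightarrow> SE_counts k n cnt \<and> finite {c. cnt c = ceil_div n k}"
    and C: "finite C" "C \<noteq> {}" "card C \<le> k"
    and avoid: "n mod k = 0 \<or> card C = k \<or> (\<forall>c\<in>C. cnt c < ceil_div n k)"
  shows "SE_counts k (n + card C) (\<lambda>c. cnt c + of_bool (c \<in> C))"
proof (cases "n mod k = 0")
  case True
  then show ?thesis by (rule SE_counts_add_rainbow_aligned[OF k _ bound C])
next
  case False
  then have "SE_counts k n cnt" "finite {c. cnt c = ceil_div n k}" using cnt by auto
  then show ?thesis
    using SE_counts_add_rainbow_whole[OF k False _ _ C(1)]
      SE_counts_add_rainbow_avoiding[OF k False _ _ C] avoid False by blast
qed

section \<open>Extending colourings by rainbow blocks\<close>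

lemma graph_sym: "graph V E \<Longrightarrow> E u v \<Longrightarrow> E v u"
  unfolding graph_def by blast

lemma graph_irrefl: "graph V E \<Longrightarrow> \<not> E v v"
  unfolding graph_def by blast

lemma graph_nbhd_subset: "graph V E \<Longrightarrow> nbhd E v \<subseteq> V"
  unfolding graph_def nbhd_def by blast

lemma graph_finite: "graph V E \<Longrightarrow> finite V"
  unfolding graph_def by blast

lemma graph_finite_nbhd: "graph V E \<Longrightarrow> finite (nbhd E v)"
  using finite_subset[OF graph_nbhd_subset graph_finite] .

lemma card_nbhd_inter_le_degree: "graph V E \<Longrightarrow> card (nbhd E v \<inter> X) \<le> degree E v"
  unfolding degree_def by (intro card_mono graph_finite_nbhd) auto

lemma SE_coloring_iff:
  "SE_coloring W E k L f \<longleftrightarrow> L_coloring W E L f \<and>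
     (W \<noteq> {} \<longrightarrow> SE_counts k (card W) (\<lambda>c. card (color_class W f c)))"
  unfolding SE_coloring_def SE_counts_def ..

lemma L_coloring_override:
  assumes G: "graph V E" and f: "L_coloring W E L f" and g: "inj_on g P" "\<forall>v\<in>P. g v \<in> L v"
    and proper: "\<forall>v\<in>P. \<forall>u\<in>W. E v u \<longrightarrow> g v \<noteq> f u"
  shows "L_coloring (W \<union> P) E L (\<lambda>v. if v \<in> P then g v else f v)"
  unfolding L_coloring_def
proof (intro conjI ballI impI)
  fix v assume "v \<in> W \<union> P"
  then show "(if v \<in> P then g v else f v) \<in> L v" using f g(2) unfolding L_coloring_def by auto
next
  fix u v assume uv: "u \<in> W \<union> P" "v \<in> W \<union> P" "E u v"
  have "u \<noteq> v" "E v u" using uv(3) graph_irrefl[OF G] graph_sym[OF G] by auto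
  consider "u \<in> P" "v \<in> P" | "u \<in> P" "v \<notin> P" | "u \<notin> P" "v \<in> P" | "u \<notin> P" "v \<notin> P"
    by blast
  then show "(if u \<in> P then g u else f u) \<noteq> (if v \<in> P then g v else f v)"
  proof cases
    case 1
    then show ?thesis using inj_onD[OF g(1)] \<open>u \<noteq> v\<close> by auto
  next
    case 2
    then show ?thesis using proper[rule_format, of u v] uv by auto
  next
    case 3
    then show ?thesis using proper[rule_format, of v u] uv \<open>E v u\<close> by auto
  next
    case 4
    then show ?thesis using f uv unfolding L_coloring_def by auto
  qed
qed

lemma card_color_class_override:
  assumes "W \<inter> P = {}" "finite W" "finite P" "inj_on g P"
  shows "card (color_class (W \<union> P) (\<lambda>v. if v \<in> P then g v else f v) c)
    = card (color_class W f c) + of_bool (c \<in> g ` P)"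
proof -
  have "color_class (W \<union> P) (\<lambda>v. if v \<in> P then g v else f v) c
      = color_class W f c \<union> {v\<in>P. g v = c}"
    using assms(1) unfolding color_class_def by auto
  moreover have "card {v\<in>P. g v = c} = of_bool (c \<in> g ` P)"
  proof (cases "c \<in> g ` P")
    case True
    then obtain v where "v \<in> P" "c = g v" by blast
    then have "{v\<in>P. g v = c} = {v}" using assms(4) unfolding inj_on_def by auto
    then show ?thesis using True by simp
  next
    case False
    then have "{v\<in>P. g v = c} = {}" by blast
    then show ?thesis using False by (simp only: card.empty of_bool_eq(1))
  qed
  moreover have "color_class W f c \<inter> {v\<in>P. g v = c} = {}"
    using assms(1) unfolding color_class_def by auto
  ultimately show ?thesis
    using assms(2,3) by (simp add: card_Un_disjoint color_class_def)
qed

lemma finite_full_colors: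
  assumes "finite W" "W \<noteq> {}" "0 < k"
  shows "finite {c. card (color_class W f c) = ceil_div (card W) k}"
proof -
  have "c \<in> f ` W" if "card (color_class W f c) = ceil_div (card W) k" for c
  proof -
    have "color_class W f c \<noteq> {}"
      using that ceil_div_pos[OF _ assms(3), of "card W"] assms(1,2) by (auto simp: card_gt_0_iff)
    then show ?thesis by (auto simp: color_class_def)
  qed
  then have "{c. card (color_class W f c) = ceil_div (card W) k} \<subseteq> f ` W" by blast
  then show ?thesis using finite_surj[OF assms(1)] by blast
qed

lemma SE_coloring_override:
  assumes G: "graph V E" and WV: "W \<subseteq> V" and PV: "P \<subseteq> V" and disj: "W \<inter> P = {}"
    and P: "P \<noteq> {}" "card P \<le> k" and f: "SE_coloring W E k L f"
    and g: "inj_on g P" "\<forall>v\<in>P. g v \<in> L v" and proper: "\<forall>v\<in>P. \<forall>u\<in>W. E v u \<longrightarrow> g v \<noteq> f u"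
    and avoid: "card W mod k = 0 \<or> card P = k \<or>
      (\<forall>v\<in>P. card (color_class W f (g v)) \<noteq> ceil_div (card W) k)"
  shows "SE_coloring (W \<union> P) E k L (\<lambda>v. if v \<in> P then g v else f v)"
proof -
  have fin: "finite W" "finite P" using finite_subset[OF _ graph_finite[OF G]] WV PV by auto
  have k: "0 < k" using P fin card_gt_0_iff by fastforce
  define cnt where "cnt c = card (color_class W f c)" for c
  have f': "L_coloring W E L f" "W \<noteq> {} \<Longrightarrow> SE_counts k (card W) cnt"
    using f unfolding SE_coloring_iff cnt_def by auto
  have bound: "\<forall>c. cnt c \<le> ceil_div (card W) k"
    using f'(2) unfolding SE_counts_def by (cases "W = {}") (auto simp: cnt_def color_class_def)
  have counts: "SE_counts k (card W) cnt \<and> finite {c. cnt c = ceil_div (card W) k}"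
    if "card W mod k \<noteq> 0"
  proof -
    have "W \<noteq> {}" using that by auto
    then show ?thesis using f'(2) finite_full_colors[OF fin(1) _ k] unfolding cnt_def by blast
  qed
  have C: "finite (g ` P)" "g ` P \<noteq> {}" "card (g ` P) = card P"
    using fin(2) P(1) card_image[OF g(1)] by auto
  have "card W mod k = 0 \<or> card (g ` P) = k \<or> (\<forall>c\<in>g ` P. cnt c < ceil_div (card W) k)"
    using avoid bound C(3) by (auto simp: cnt_def le_less)
  then have "SE_counts k (card W + card P) (\<lambda>c. cnt c + of_bool (c \<in> g ` P))"
    using SE_counts_add_rainbow[OF k bound counts C(1,2)] C(3) P(2) by simp
  moreover have "card (W \<union> P) = card W + card P" using card_Un_disjoint[OF fin disj] .
  moreover have "W \<union> P \<noteq> {}" using P(1) by blast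
  moreover note card_color_class_override[OF disj fin g(1)]
  ultimately show ?thesis
    unfolding SE_coloring_iff using L_coloring_override[OF G f'(1) g proper] by (simp add: cnt_def)
qed

lemma inj_on_fun_upd_Diff:
  assumes "v \<in> A" "inj_on g (A - {v})" "c \<notin> g ` (A - {v})"
  shows "inj_on (g(v := c)) A"
proof -
  have "inj_on (g(v := c)) (A - {v})" using inj_on_fun_updI[OF assms(2,3)] .
  moreover have "(g(v := c)) ` (A - {v}) = g ` (A - {v})" by auto
  ultimately have "inj_on (g(v := c)) (insert v (A - {v}))"
    unfolding inj_on_insert using assms(3) by simp
  then show ?thesis using insert_Diff[OF assms(1)] by simp
qed

lemma inj_choice_avoiding:
  fixes P :: "'a set" and L F :: "'a \<Rightarrow> 'c set" and h :: "'a \<Rightarrow> nat"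
  assumes "finite P"
    and "\<forall>v\<in>P. finite (L v) \<and> card (L v) = k"
    and "\<forall>v\<in>P. finite (F v) \<and> card (F v) \<le> h v"
    and "\<forall>v\<in>P. h v + card {u\<in>P. h v \<le> h u} \<le> k"
  shows "\<exists>g. inj_on g P \<and> (\<forall>v\<in>P. g v \<in> L v \<and> g v \<notin> F v)"
  using assms
proof (induction P rule: finite_remove_induct)
  case empty
  then show ?case by simp
next
  case (remove A)
  obtain v where v: "v \<in> A" "\<forall>u\<in>A. h v \<le> h u"
    using ex_is_arg_min_if_finite[OF remove.hyps(1,2), of h] by (auto simp: is_arg_min_def not_less)
  have "\<forall>w\<in>A - {v}. h w + card {u\<in>A - {v}. h w \<le> h u} \<le> k"
  proof
    fix w assume "w \<in> A - {v}"
    then have "h w + card {u\<in>A. h w \<le> h u} \<le> k" using remove.prems(3) by blast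
    moreover have "card {u\<in>A - {v}. h w \<le> h u} \<le> card {u\<in>A. h w \<le> h u}"
      using remove.hyps(1) by (intro card_mono) auto
    ultimately show "h w + card {u\<in>A - {v}. h w \<le> h u} \<le> k" by linarith
  qed
  then obtain g where g: "inj_on g (A - {v})" "\<forall>w\<in>A - {v}. g w \<in> L w \<and> g w \<notin> F w"
    using remove.IH[OF v(1)] remove.prems(1,2) by auto
  define X where "X = F v \<union> g ` (A - {v})"
  \<comment> \<open>v has the least level, so every vertex of A counts against it in the level condition\<close>
  have "{u\<in>A. h v \<le> h u} = A" using v(2) by blast
  then have "h v + card A \<le> k" using remove.prems(3) v(1) by auto
  moreover have "card X \<le> h v + (card A - 1)"
  proof -
    have "card (g ` (A - {v})) \<le> card A - 1"
      using card_image_le[of "A - {v}" g] remove.hyps(1) v(1) by simp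
    moreover have "card (F v) \<le> h v" using remove.prems(2) v(1) by blast
    ultimately show ?thesis using card_Un_le[of "F v" "g ` (A - {v})"] unfolding X_def by linarith
  qed
  moreover have "card A \<ge> 1" using remove.hyps(1,2) by (simp add: Suc_le_eq card_gt_0_iff)
  ultimately have "card X < card (L v)" using remove.prems(1) v(1) by auto
  moreover have "finite X" using remove.hyps(1) remove.prems(2) v(1) unfolding X_def by auto
  ultimately have "\<not> L v \<subseteq> X" using card_mono[of X "L v"] by linarith
  then obtain c where c: "c \<in> L v" "c \<notin> F v" "c \<notin> g ` (A - {v})" unfolding X_def by blast
  have "inj_on (g(v := c)) A" using inj_on_fun_upd_Diff[OF v(1) g(1) c(3)] .
  moreover have "\<forall>w\<in>A. (g(v := c)) w \<in> L w \<and> (g(v := c)) w \<notin> F w" using g(2) c by auto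
  ultimately show ?case by blast
qed

text \<open>
  How many full colour classes the b distinct colours of a new block must avoid when n vertices
  are coloured already; if n is a multiple of k or b = k, the bound \<lceil>n/k\<rceil> rises anyway.
\<close>
definition avoid_count :: "nat \<Rightarrow> nat \<Rightarrow> nat \<Rightarrow> nat" where
  "avoid_count k n b = (if n mod k = 0 \<or> b = k then 0 else mod_star n k)"

lemma SE_coloring_extend_block:
  assumes G: "graph V E" and LA: "list_assignment V k L"
    and WV: "W \<subseteq> V" and PV: "P \<subseteq> V" and disj: "W \<inter> P = {}" and P: "P \<noteq> {}" "card P \<le> k"
    and f: "SE_coloring W E k L f"
    and level: "\<forall>v\<in>P. h v + card {u\<in>P. h v \<le> h u} \<le> k"
    and nbrs: "\<forall>v\<in>P. card (nbhd E v \<inter> W) + avoid_count k (card W) (card P) \<le> h v"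
  shows "\<exists>f'. SE_coloring (W \<union> P) E k L f' \<and> (\<forall>v\<in>W. f' v = f v)"
proof -
  have fin: "finite W" "finite P" using finite_subset[OF _ graph_finite[OF G]] WV PV by auto
  have k: "0 < k" using P fin card_gt_0_iff by fastforce
  define Full where "Full = (if card W mod k = 0 \<or> card P = k then {}
    else {c. card (color_class W f c) = ceil_div (card W) k})"
  have Full: "finite Full" "card Full \<le> avoid_count k (card W) (card P)"
  proof (atomize (full), cases "card W mod k = 0 \<or> card P = k")
    case False
    then have "W \<noteq> {}" by auto
    then show "finite Full \<and> card Full \<le> avoid_count k (card W) (card P)"
      using False finite_full_colors[OF fin(1) _ k] f
      unfolding SE_coloring_iff SE_counts_def Full_def avoid_count_def by auto
  qed (simp add: Full_def avoid_count_def)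
  define F where "F v = f ` (nbhd E v \<inter> W) \<union> Full" for v
  have F: "\<forall>v\<in>P. finite (F v) \<and> card (F v) \<le> h v"
  proof
    fix v assume v: "v \<in> P"
    have "card (F v) \<le> card (nbhd E v \<inter> W) + card Full"
      using card_Un_le[of "f ` (nbhd E v \<inter> W)" Full] card_image_le[of "nbhd E v \<inter> W" f] fin(1)
      unfolding F_def by simp
    moreover have "card (nbhd E v \<inter> W) + card Full \<le> h v" using Full(2) nbrs v by force
    moreover have "finite (F v)" using Full(1) fin(1) unfolding F_def by blast
    ultimately show "finite (F v) \<and> card (F v) \<le> h v" by linarith
  qed
  have "\<forall>v\<in>P. finite (L v) \<and> card (L v) = k" using LA PV unfolding list_assignment_def by blast
  then obtain g where g: "inj_on g P" "\<forall>v\<in>P. g v \<in> L v" "\<forall>v\<in>P. g v \<notin> F v"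
    using inj_choice_avoiding[OF fin(2) _ F level] by blast
  have proper: "\<forall>v\<in>P. \<forall>u\<in>W. E v u \<longrightarrow> g v \<noteq> f u"
    using g(3) unfolding F_def nbhd_def by blast
  have "card W mod k = 0 \<or> card P = k \<or>
      (\<forall>v\<in>P. card (color_class W f (g v)) \<noteq> ceil_div (card W) k)"
    using g(3) unfolding F_def Full_def by auto
  then have "SE_coloring (W \<union> P) E k L (\<lambda>v. if v \<in> P then g v else f v)"
    by (rule SE_coloring_override[OF G WV PV disj P f g(1,2) proper])
  moreover have "\<forall>v\<in>W. (if v \<in> P then g v else f v) = f v" using disj by auto
  ultimately show ?thesis by blast
qed

lemma SE_coloring_extend_sparse_block_fits:
  assumes G: "graph V E" and LA: "list_assignment V k L"
    and WV: "W \<subseteq> V" and PV: "P \<subseteq> V" and disj: "W \<inter> P = {}" and f: "SE_coloring W E k L f"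
    and g: "g \<in> P" "nbhd E g \<inter> W = {}" and sparse: "\<forall>v\<in>P. card (nbhd E v \<inter> W) \<le> 1"
    and fits: "avoid_count k (card W) (card P) + card P \<le> k"
  shows "\<exists>f'. SE_coloring (W \<union> P) E k L f' \<and> (\<forall>v\<in>W. f' v = f v)"
proof -
  define a where "a = avoid_count k (card W) (card P)"
  define h where "h v = a + (if v = g then 0 else 1)" for v
  have fin: "finite P" using finite_subset[OF PV graph_finite[OF G]] .
  have P: "P \<noteq> {}" "card P \<le> k" using g(1) fits by auto
  have "h v + card {u\<in>P. h v \<le> h u} \<le> k" if "v \<in> P" for v
  proof (cases "v = g")
    case True
    have "card {u\<in>P. h v \<le> h u} \<le> card P" using fin by (intro card_mono) auto
    then show ?thesis using True fits by (simp add: h_def a_def)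
  next
    case False
    have "{u\<in>P. h v \<le> h u} \<subseteq> P - {g}" using False by (auto simp: h_def)
    then have "card {u\<in>P. h v \<le> h u} \<le> card P - 1"
      using card_mono[of "P - {g}"] fin g(1) by fastforce
    moreover have "1 \<le> card P" using P(1) fin by (simp add: Suc_le_eq card_gt_0_iff)
    ultimately show ?thesis using False fits by (simp add: h_def a_def)
  qed
  moreover have "card (nbhd E v \<inter> W) + a \<le> h v" if "v \<in> P" for v
    using g(2) sparse that by (simp add: h_def)
  ultimately show ?thesis
    using SE_coloring_extend_block[OF G LA WV PV disj P f, of h] by (simp add: a_def)
qed

lemma SE_coloring_extend_block_aligned:
  assumes G: "graph V E" and LA: "list_assignment V k L"
    and WV: "W \<subseteq> V" and PV: "P \<subseteq> V" and disj: "W \<inter> P = {}" and f: "SE_coloring W E k L f"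
    and aligned: "card W mod k = 0" and P: "P \<noteq> {}" "card P + 2 \<le> k"
    and deg: "\<forall>v\<in>P. degree E v \<le> 2"
  shows "\<exists>f'. SE_coloring (W \<union> P) E k L f' \<and> (\<forall>v\<in>W. f' v = f v)"
proof -
  have "card (nbhd E v \<inter> W) \<le> 2" if "v \<in> P" for v
    using card_nbhd_inter_le_degree[OF G, of v W] deg that by (meson le_trans)
  then show ?thesis
    using SE_coloring_extend_block[OF G LA WV PV disj P(1) _ f, of "\<lambda>_. 2"] P(2) aligned
    by (simp add: avoid_count_def)
qed

lemma obtain_subset_with_card_containing:
  assumes "finite A" "a \<in> A" "1 \<le> m" "m \<le> card A"
  obtains B where "a \<in> B" "B \<subseteq> A" "card B = m"
proof -
  have "m - 1 \<le> card (A - {a})" using assms by simp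
  then obtain B where B: "B \<subseteq> A - {a}" "card B = m - 1" "finite B"
    by (rule obtain_subset_with_card_n)
  then have "card (insert a B) = m" using assms(3) by (subst card_insert_disjoint) auto
  then show thesis using that[of "insert a B"] B(1) assms(2) by blast
qed

lemma card_Un_fill_level:
  assumes "finite W" "finite P" "W \<inter> P = {}" "card P = k - card W mod k" "card W mod k < k"
  shows "card (W \<union> P) mod k = 0"
proof -
  have "card (W \<union> P) = card W div k * k + card W mod k + (k - card W mod k)"
    using card_Un_disjoint[OF assms(1-3)] assms(4) by simp
  also have "\<dots> = Suc (card W div k) * k" using assms(5) by (simp only: mult_Suc)
  finally show ?thesis by simp
qed

lemma SE_coloring_extend_sparse_block:
  assumes G: "graph V E" and LA: "list_assignment V k L"
    and WV: "W \<subseteq> V" and PV: "P \<subseteq> V" and disj: "W \<inter> P = {}" and f: "SE_coloring W E k L f"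
    and P: "card P \<le> k" and g: "g \<in> P" "nbhd E g \<inter> W = {}"
    and sparse: "\<forall>v\<in>P. card (nbhd E v \<inter> W) \<le> 1" and deg: "\<forall>v\<in>P - {g}. degree E v \<le> 2"
  shows "\<exists>f'. SE_coloring (W \<union> P) E k L f' \<and> (\<forall>v\<in>W. f' v = f v)"
proof (cases "avoid_count k (card W) (card P) + card P \<le> k")
  case True
  then show ?thesis
    using SE_coloring_extend_sparse_block_fits[OF G LA WV PV disj f g sparse] by blast
next
  case False
  \<comment> \<open>First fill up the last partial level of W with a part P1 containing g, then colour the rest.\<close>
  define t where "t = card W mod k"
  have fin: "finite W" "finite P" using finite_subset[OF _ graph_finite[OF G]] WV PV by auto
  have t: "0 < t" "t < k" "k < t + card P" "card P < k"
    using False P g(1) unfolding avoid_count_def mod_star_def t_def by (auto split: if_splits)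
  have "1 \<le> k - t" "k - t \<le> card P" using t by auto
  then obtain P1 where P1: "g \<in> P1" "P1 \<subseteq> P" "card P1 = k - t"
    by (rule obtain_subset_with_card_containing[OF fin(2) g(1)])
  have "avoid_count k (card W) (card P1) + card P1 \<le> k"
    using t P1(3) unfolding avoid_count_def mod_star_def t_def by auto
  moreover have P1V: "P1 \<subseteq> V" and disj1: "W \<inter> P1 = {}"
    and "\<forall>v\<in>P1. card (nbhd E v \<inter> W) \<le> 1"
    using P1(2) PV disj sparse by auto
  ultimately obtain f1 where f1: "SE_coloring (W \<union> P1) E k L f1" "\<forall>v\<in>W. f1 v = f v"
    using SE_coloring_extend_sparse_block_fits[OF G LA WV _ _ f P1(1) g(2)] by blast
  define P2 where "P2 = P - P1"
  have aligned: "card (W \<union> P1) mod k = 0"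
    using card_Un_fill_level[OF fin(1) finite_subset[OF P1(2) fin(2)] disj1] P1(3) t(2)
    unfolding t_def by simp
  have "card P2 = card P - (k - t)"
    using card_Diff_subset[OF finite_subset[OF P1(2) fin(2)] P1(2)] P1(3) unfolding P2_def by simp
  then have P2: "P2 \<noteq> {}" "card P2 + 2 \<le> k" using t by auto
  have "\<forall>v\<in>P2. degree E v \<le> 2" using deg P1(1) unfolding P2_def by blast
  moreover have "W \<union> P1 \<subseteq> V" "P2 \<subseteq> V" "(W \<union> P1) \<inter> P2 = {}"
    using WV PV P1V disj unfolding P2_def by auto
  ultimately obtain f2 where f2: "SE_coloring (W \<union> P1 \<union> P2) E k L f2" "\<forall>v\<in>W \<union> P1. f2 v = f1 v"
    using SE_coloring_extend_block_aligned[OF G LA _ _ _ f1(1) aligned P2] by blast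
  have "W \<union> P1 \<union> P2 = W \<union> P" using P1(2) unfolding P2_def by blast
  then show ?thesis using f1(2) f2 by auto
qed

lemma levels_with_two_cheap_vertices:
  fixes out :: "'a \<Rightarrow> nat"
  assumes fin: "finite D" and D: "card D = k" and h: "h \<in> D" "out h = 0"
    and u: "u \<in> D" "u \<noteq> h" "out u \<le> 1"
    and others: "\<forall>v\<in>D - {r}. out v \<le> 2" and root: "r \<in> D \<Longrightarrow> out r < k"
    and v: "v \<in> D"
  shows "out v + card {w\<in>D. out v \<le> out w} \<le> k"
proof -
  have card_le: "card {w\<in>D. out v \<le> out w} \<le> card X" if "{w\<in>D. out v \<le> out w} \<subseteq> X" "X \<subseteq> D"
    for X using card_mono[OF finite_subset[OF that(2) fin] that(1)] .
  have k: "2 \<le> k" using card_mono[OF fin, of "{h, u}"] D h(1) u(1,2) by simp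
  consider "out v = 0" | "out v = 1" | "out v = 2" | "3 \<le> out v" by linarith
  then show ?thesis
  proof cases
    case 1
    then show ?thesis using card_le[of D] D by simp
  next
    case 2
    then have "{w\<in>D. out v \<le> out w} \<subseteq> D - {h}" using h(2) by auto
    then show ?thesis using card_le[of "D - {h}"] 2 D h(1) fin k by simp
  next
    case 3
    then have "{w\<in>D. out v \<le> out w} \<subseteq> D - {h, u}" using h(2) u(3) by auto
    then show ?thesis using card_le[of "D - {h, u}"] 3 D h(1) u(1,2) fin k by simp
  next
    case 4
    have big: "w = r" if "w \<in> D" "3 \<le> out w" for w using others that by force
    then have "{w\<in>D. out v \<le> out w} \<subseteq> {r}" using 4 by force
    then have "card {w\<in>D. out v \<le> out w} \<le> 1" using card_mono[of "{r}"] by fastforce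
    then show ?thesis using root big[OF v 4] v by simp
  qed
qed

lemma SE_coloring_extend_full_block:
  assumes G: "graph V E" and LA: "list_assignment V k L"
    and WV: "W \<subseteq> V" and DV: "D \<subseteq> V" and disj: "W \<inter> D = {}" and f: "SE_coloring W E k L f"
    and D: "card D = k" and h: "h \<in> D" "nbhd E h \<subseteq> D"
    and u: "u \<in> D" "u \<noteq> h" "card (nbhd E u - D) \<le> 1"
    and others: "\<forall>v\<in>D - {r}. card (nbhd E v - D) \<le> 2"
    and root: "r \<in> D \<Longrightarrow> card (nbhd E r - D) < k"
  shows "\<exists>f'. SE_coloring (W \<union> D) E k L f' \<and> (\<forall>v\<in>W. f' v = f v)"
proof -
  define out where "out v = card (nbhd E v - D)" for v
  have fin: "finite D" using finite_subset[OF DV graph_finite[OF G]] .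
  have out_h: "out h = 0" using h(2) graph_finite_nbhd[OF G] by (simp add: out_def)
  have "\<forall>v\<in>D - {r}. out v \<le> 2" "r \<in> D \<Longrightarrow> out r < k" "out u \<le> 1"
    using others root u(3) unfolding out_def by auto
  then have level: "\<forall>v\<in>D. out v + card {w\<in>D. out v \<le> out w} \<le> k"
    using levels_with_two_cheap_vertices[where out = out, OF fin D h(1) out_h u(1,2)] by blast
  have "card (nbhd E v \<inter> W) \<le> out v" for v
    unfolding out_def using disj by (intro card_mono) (auto simp: graph_finite_nbhd[OF G])
  then show ?thesis
    using SE_coloring_extend_block[OF G LA WV DV disj _ _ f level] h(1) D
    by (auto simp: avoid_count_def)
qed

section \<open>Bugs\<close>

lemma degree_le_2_nbr_cases:
  assumes G: "graph V E" and deg: "degree E a \<le> 2" and nbrs: "E a p" "E a q" "p \<noteq> q" and b: "E a b"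
  shows "b = p \<or> b = q"
proof (rule ccontr)
  assume "\<not> (b = p \<or> b = q)"
  then have "card {p, q, b} = 3" using nbrs(3) by auto
  moreover have "card {p, q, b} \<le> degree E a"
    unfolding degree_def using nbrs b
    by (intro card_mono graph_finite_nbhd[OF G]) (auto simp: nbhd_def)
  ultimately show False using deg by simp
qed

lemma card_closed_nbhd_le: "graph V E \<Longrightarrow> degree E v \<le> 2 \<Longrightarrow> card (insert v (nbhd E v)) \<le> 3"
  unfolding degree_def by (simp add: card_insert_if graph_finite_nbhd)

lemma card_nbhd_diff_less_degree:
  "graph V E \<Longrightarrow> E v z \<Longrightarrow> z \<in> X \<Longrightarrow> card (nbhd E v - X) < degree E v"
  unfolding degree_def by (rule psubset_card_mono[OF graph_finite_nbhd]) (auto simp: nbhd_def)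

lemma induced_connected_nbr:
  assumes "induced_connected E S" "v \<in> S" "u \<in> S" "u \<noteq> v"
  obtains z where "z \<in> S" "E v z"
proof -
  have "(\<lambda>x y. E x y \<and> x \<in> S \<and> y \<in> S)\<^sup>*\<^sup>* v u"
    using assms unfolding induced_connected_def by blast
  then show thesis
    by (cases rule: converse_rtranclpE) (use assms that in auto)
qed

lemma induced_connected_closed:
  assumes "induced_connected E S" "X \<subseteq> S" "x \<in> X"
    and closed: "\<forall>a\<in>X. \<forall>b\<in>S. E a b \<longrightarrow> b \<in> X"
  shows "X = S"
proof
  show "S \<subseteq> X"
  proof
    fix v assume "v \<in> S"
    then have "(\<lambda>x y. E x y \<and> x \<in> S \<and> y \<in> S)\<^sup>*\<^sup>* x v"
      using assms(1-3) unfolding induced_connected_def by blast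
    then show "v \<in> X"
      by (induction rule: rtranclp_induct) (use assms(3) closed in auto)
  qed
qed (fact assms(2))

lemma bug_degree_le_2: "bug V E S r \<Longrightarrow> v \<in> S \<Longrightarrow> v \<noteq> r \<Longrightarrow> degree E v \<le> 2"
  unfolding bug_def V3plus_def by fastforce

lemma bug_outer_nbrs_le_1:
  assumes G: "graph V E" and B: "bug V E S r" and v: "v \<in> S" "v \<noteq> r"
  shows "card (nbhd E v - S) \<le> 1"
proof -
  obtain z where "z \<in> S" "E v z"
    using B v unfolding bug_def by (metis induced_connected_nbr)
  then show ?thesis
    using card_nbhd_diff_less_degree[OF G] bug_degree_le_2[OF B v] by fastforce
qed

text \<open>
  g is coloured in the first round and K in the second. There h sees no coloured vertex and u at
  most one, which gives the greedy choice its slack, and a root inside K has a neighbour in K,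
  hence fewer than k coloured neighbours.
\<close>
definition bug_core :: "('a \<Rightarrow> 'a \<Rightarrow> bool) \<Rightarrow> 'a set \<Rightarrow> 'a \<Rightarrow> 'a \<Rightarrow> 'a set \<Rightarrow> bool" where
  "bug_core E S r g K \<longleftrightarrow> hidden E S g \<and> K \<subseteq> S \<and> g \<notin> K \<and> finite K \<and> card K \<le> 3 \<and>
     (\<exists>h\<in>K. nbhd E h \<subseteq> K \<and> (\<exists>u\<in>K. u \<noteq> h \<and> u \<noteq> r \<and> (\<exists>z\<in>K. E u z))) \<and>
     (r = g \<or> r \<in> K \<and> (\<exists>z\<in>K. E r z))"

lemma bug_coreI:
  assumes "hidden E S g" "K \<subseteq> S" "g \<notin> K" "finite K" "card K \<le> 3"
    and "h \<in> K" "nbhd E h \<subseteq> K" "u \<in> K" "u \<noteq> h" "u \<noteq> r" "z \<in> K" "E u z"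
    and "r = g \<or> r \<in> K \<and> (\<exists>z\<in>K. E r z)"
  shows "bug_core E S r g K"
  using assms unfolding bug_core_def by blast

lemma bug_core_of_hidden_root:
  assumes G: "graph V E" and B: "bug V E S r" and r: "hidden E S r"
    and b: "hidden E S b" "b \<noteq> r" "\<not> E r b"
  shows "bug_core E S r r (insert b (nbhd E b))"
proof -
  have bS: "b \<in> S" and NbS: "nbhd E b \<subseteq> S" using b(1) unfolding hidden_def by auto
  obtain z where z: "z \<in> S" "E b z"
    using induced_connected_nbr[of E S b r] B bS b(2) unfolding bug_def by blast
  have "z \<noteq> r" "z \<noteq> b" "E z b" "z \<in> nbhd E b"
    using z(2) b(3) graph_sym[OF G] graph_irrefl[OF G] by (auto simp: nbhd_def)
  moreover have "r \<notin> insert b (nbhd E b)" using b(2,3) graph_sym[OF G] by (auto simp: nbhd_def)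
  moreover have "card (insert b (nbhd E b)) \<le> 3"
    using card_closed_nbhd_le[OF G bug_degree_le_2[OF B bS b(2)]] .
  ultimately show ?thesis
    using r bS NbS graph_finite_nbhd[OF G, of b]
    by (intro bug_coreI[where h = b and u = z and z = b]) auto
qed

lemma bug_root_has_hidden_nbr:
  assumes G: "graph V E" and B: "bug V E S r" and x: "hidden E S x" "x \<noteq> r"
  obtains \<rho> where "E r \<rho>" "hidden E S \<rho>"
proof -
  have ic: "induced_connected E S" and rS: "r \<in> S" using B unfolding bug_def by auto
  have "\<exists>\<rho>. E r \<rho> \<and> hidden E S \<rho>"
  proof (rule ccontr)
    assume none: "\<nexists>\<rho>. E r \<rho> \<and> hidden E S \<rho>"
    define X where "X = insert r (nbhd E r \<inter> S)"
    \<comment> \<open>a non-hidden neighbour of r has its second neighbour outside S, so X is closed in S\<close>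
    have "\<forall>a\<in>X. \<forall>b\<in>S. E a b \<longrightarrow> b \<in> X"
    proof (intro ballI impI)
      fix a b assume a: "a \<in> X" "b \<in> S" "E a b"
      show "b \<in> X"
      proof (cases "a = r")
        case True
        then show ?thesis using a by (auto simp: X_def nbhd_def)
      next
        case False
        then have ar: "E r a" "a \<in> S" using a(1) by (auto simp: X_def nbhd_def)
        then obtain z where z: "E a z" "z \<notin> S" using none unfolding hidden_def nbhd_def by auto
        have "b = r \<or> b = z"
          using degree_le_2_nbr_cases[OF G bug_degree_le_2[OF B ar(2) False] graph_sym[OF G ar(1)]
              z(1) _ a(3)] z(2) rS by blast
        then show ?thesis using z(2) a(2) by (auto simp: X_def)
      qed
    qed
    then have "X = S" using induced_connected_closed[OF ic, of X r] rS by (auto simp: X_def)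
    then have "E r x" using x unfolding hidden_def X_def nbhd_def by auto
    then show False using none x(1) by blast
  qed
  then show thesis using that by blast
qed

lemma bug_core_of_pendant_root_nbr:
  assumes G: "graph V E" and B: "bug V E S r" and S: "4 \<le> card S"
    and \<rho>: "E r \<rho>" "hidden E S \<rho>" "nbhd E \<rho> \<subseteq> {r}"
    and g: "hidden E S g" "g \<noteq> r" "g \<noteq> \<rho>" and only: "\<forall>w\<in>S. E r w \<longrightarrow> w = \<rho> \<or> w = g"
  shows "\<exists>a. bug_core E S r \<rho> {g, r, a}"
proof -
  have ic: "induced_connected E S" and rS: "r \<in> S" using B unfolding bug_def by auto
  have \<rho>S: "\<rho> \<in> S" and gS: "g \<in> S" using \<rho>(2) g(1) unfolding hidden_def by auto
  have \<rho>_nbr: "E \<rho> b \<Longrightarrow> b = r" for b using \<rho>(3) unfolding nbhd_def by blast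
  have card2: "card {x, y} \<le> 2" and card3: "card {x, y, z} \<le> 3" for x y z :: 'a
    by (simp_all add: card_insert_if)
  have Erg: "E r g"
  proof (rule ccontr)
    assume "\<not> E r g"
    then have "\<forall>x\<in>{r, \<rho>}. \<forall>b\<in>S. E x b \<longrightarrow> b \<in> {r, \<rho>}" using only \<rho>_nbr by auto
    then have "{r, \<rho>} = S" using induced_connected_closed[OF ic, of "{r, \<rho>}" r] rS \<rho>S by simp
    then show False using S card2[of r \<rho>] by simp
  qed
  obtain a where a: "a \<in> S" "E g a" "a \<noteq> r"
  proof -
    have "\<exists>a\<in>S. E g a \<and> a \<noteq> r"
    proof (rule ccontr)
      assume "\<not> (\<exists>a\<in>S. E g a \<and> a \<noteq> r)"
      then have "\<forall>x\<in>{r, \<rho>, g}. \<forall>b\<in>S. E x b \<longrightarrow> b \<in> {r, \<rho>, g}" using only \<rho>_nbr by auto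
      then have "{r, \<rho>, g} = S" using induced_connected_closed[OF ic, of "{r, \<rho>, g}" r] rS \<rho>S gS
        by simp
      then show False using S card3[of r \<rho> g] by simp
    qed
    then show thesis using that by blast
  qed
  have Egr: "E g r" using graph_sym[OF G Erg] .
  have "nbhd E g \<subseteq> {g, r, a}"
    using degree_le_2_nbr_cases[OF G bug_degree_le_2[OF B gS g(2)] Egr a(2)] a(3)
    unfolding nbhd_def by blast
  moreover have "\<rho> \<notin> {g, r, a}"
    using g(3) \<rho>(1) graph_irrefl[OF G] \<rho>_nbr[of g] graph_sym[OF G a(2)] g(2) by auto
  moreover have "a \<noteq> g" "E a g" using a(2) graph_irrefl[OF G] graph_sym[OF G] by auto
  ultimately have "bug_core E S r \<rho> {g, r, a}"
    using \<rho>(2) gS rS a(1,3) Erg card3[of g r a]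
    by (intro bug_coreI[where h = g and u = a and z = g]) auto
  then show ?thesis by blast
qed

lemma bug_core_of_hidden_root_nbr:
  assumes G: "graph V E" and B: "bug V E S r" and S: "4 \<le> card S"
    and \<rho>: "E r \<rho>" "hidden E S \<rho>" and g: "hidden E S g" "g \<noteq> r" "g \<noteq> \<rho>" "\<not> E \<rho> g"
  shows "\<exists>g' K. bug_core E S r g' K"
proof -
  have rS: "r \<in> S" using B unfolding bug_def by auto
  have \<rho>S: "\<rho> \<in> S" and N\<rho>: "nbhd E \<rho> \<subseteq> S" using \<rho>(2) unfolding hidden_def by auto
  have \<rho>r: "\<rho> \<noteq> r" and E\<rho>r: "E \<rho> r" using \<rho>(1) graph_irrefl[OF G] graph_sym[OF G] by auto
  consider (branch) a where "E \<rho> a" "a \<noteq> r" | (leaf) "nbhd E \<rho> \<subseteq> {r}"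
    unfolding nbhd_def by blast
  then show ?thesis
  proof cases
    case branch
    define K where "K = insert \<rho> (nbhd E \<rho>)"
    have "card K \<le> 3" using card_closed_nbhd_le[OF G bug_degree_le_2[OF B \<rho>S \<rho>r]] unfolding K_def .
    moreover have "a \<in> K" "a \<noteq> \<rho>" "E a \<rho>" "r \<in> K" "g \<notin> K"
      using branch E\<rho>r g(3,4) graph_irrefl[OF G] graph_sym[OF G] by (auto simp: K_def nbhd_def)
    ultimately have "bug_core E S r g K"
      using g(1) \<rho>S N\<rho> branch(2) \<rho>(1) graph_finite_nbhd[OF G, of \<rho>]
      by (intro bug_coreI[where h = \<rho> and u = a and z = \<rho>]) (auto simp: K_def)
    then show ?thesis by blast
  next
    case leaf
    show ?thesis
    proof (cases "\<exists>w\<in>S. E r w \<and> w \<noteq> \<rho> \<and> w \<noteq> g")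
      case True
      then obtain w where w: "w \<in> S" "E r w" "w \<noteq> \<rho>" "w \<noteq> g" by blast
      have "w \<noteq> r" "E w r" using w(2) graph_irrefl[OF G] graph_sym[OF G] by auto
      then have "bug_core E S r g {\<rho>, r, w}"
        using g(1-3) \<rho>S rS w leaf \<rho>(1)
        by (intro bug_coreI[where h = \<rho> and u = w and z = r]) (auto simp: card_insert_if)
      then show ?thesis by blast
    next
      case False
      then show ?thesis using bug_core_of_pendant_root_nbr[OF G B S \<rho> leaf g(1-3)] by blast
    qed
  qed
qed

lemma bug_core_exists:
  assumes G: "graph V E" and B: "bug V E S r" and S: "4 \<le> card S"
    and pair: "\<exists>x\<in>S. \<exists>y\<in>S. x \<noteq> y \<and> \<not> E x y \<and> hidden E S x \<and> hidden E S y"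
  shows "\<exists>g K. bug_core E S r g K"
proof -
  obtain x y where xy: "x \<noteq> y" "\<not> E x y" "hidden E S x" "hidden E S y" using pair by blast
  consider "x = r" | "y = r" | "x \<noteq> r" "y \<noteq> r" by blast
  then show ?thesis
  proof cases
    case 1
    then show ?thesis using bug_core_of_hidden_root[OF G B _ xy(4)] xy by auto
  next
    case 2
    then show ?thesis using bug_core_of_hidden_root[OF G B _ xy(3)] xy graph_sym[OF G] by blast
  next
    case 3
    obtain \<rho> where \<rho>: "E r \<rho>" "hidden E S \<rho>" using bug_root_has_hidden_nbr[OF G B xy(3) 3(1)] .
    have \<rho>S: "\<rho> \<in> S" using \<rho>(2) unfolding hidden_def by blast
    have deg: "degree E \<rho> \<le> 2" using bug_degree_le_2[OF B \<rho>S] \<rho>(1) graph_irrefl[OF G] by blast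
    have "\<exists>g\<in>{x, y}. g \<noteq> \<rho> \<and> \<not> E \<rho> g"
    proof (rule ccontr)
      assume "\<not> (\<exists>g\<in>{x, y}. g \<noteq> \<rho> \<and> \<not> E \<rho> g)"
      then have x: "x = \<rho> \<or> E \<rho> x" and y: "y = \<rho> \<or> E \<rho> y" by auto
      show False
      proof (cases "x = \<rho> \<or> y = \<rho>")
        case True
        then show False using x y xy(1,2) graph_sym[OF G] by blast
      next
        case False
        then have "E \<rho> x" "E \<rho> y" using x y by auto
        then show False
          using degree_le_2_nbr_cases[OF G deg _ _ xy(1) graph_sym[OF G \<rho>(1)]] 3 by blast
      qed
    qed
    then obtain g where "hidden E S g" "g \<noteq> r" "g \<noteq> \<rho>" "\<not> E \<rho> g" using xy(3,4) 3 by blast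
    then show ?thesis using bug_core_of_hidden_root_nbr[OF G B S \<rho>] by blast
  qed
qed

lemma bug_extend_to_part:
  assumes G: "graph V E" and LA: "list_assignment V k L" and B: "bug V E S r"
    and T: "T \<subseteq> S" "card T \<le> k" "g \<in> T" "hidden E S g" "r \<in> T \<Longrightarrow> r = g"
    and f: "SE_coloring (V - S) E k L f"
  shows "\<exists>f'. SE_coloring ((V - S) \<union> T) E k L f' \<and> (\<forall>v\<in>V - S. f' v = f v)"
proof -
  have SV: "S \<subseteq> V" using B unfolding bug_def by blast
  have outer: "nbhd E v \<inter> (V - S) = nbhd E v - S" for v using graph_nbhd_subset[OF G] by blast
  have "card (nbhd E v \<inter> (V - S)) \<le> 1" if "v \<in> T" for v
  proof (cases "v = g")
    case True
    then have "nbhd E v \<inter> (V - S) = {}" using T(4) unfolding hidden_def by blast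
    then show ?thesis by (simp only: card.empty zero_le)
  next
    case False
    then show ?thesis using bug_outer_nbrs_le_1[OF G B] T(1,5) that unfolding outer by blast
  qed
  moreover have "\<forall>v\<in>T - {g}. degree E v \<le> 2" using bug_degree_le_2[OF B] T(1,5) by blast
  moreover have "nbhd E g \<inter> (V - S) = {}" using T(4) unfolding hidden_def by blast
  ultimately show ?thesis
    using SE_coloring_extend_sparse_block[OF G LA _ _ _ f T(2,3)] T(1) SV by blast
qed

lemma bug_core_extend:
  assumes G: "graph V E" and LA: "list_assignment V k L" and B: "bug V E S r"
    and deg_r: "degree E r \<le> k" and core: "bug_core E S r g K"
    and D: "D \<subseteq> S" "card D = k" "K \<subseteq> D" "g \<notin> D"
    and f: "SE_coloring (V - D) E k L f"
  shows "\<exists>f'. SE_coloring V E k L f' \<and> (\<forall>v\<in>V - D. f' v = f v)"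
proof -
  obtain h u z where h: "h \<in> D" "nbhd E h \<subseteq> D" and u: "u \<in> D" "u \<noteq> h" "u \<noteq> r" "z \<in> D" "E u z"
    and root: "r \<in> D \<Longrightarrow> \<exists>z\<in>D. E r z"
    using core D(3,4) unfolding bug_core_def by blast
  have DV: "D \<subseteq> V" using B D(1) unfolding bug_def by blast
  have out_le: "card (nbhd E v - D) \<le> degree E v" for v
    unfolding degree_def by (intro card_mono graph_finite_nbhd[OF G]) auto
  have "card (nbhd E u - D) \<le> 1"
    using card_nbhd_diff_less_degree[OF G u(5,4)] bug_degree_le_2[OF B _ u(3)] u(1) D(1) by force
  moreover have "card (nbhd E v - D) \<le> 2" if "v \<in> D - {r}" for v
    using out_le[of v] bug_degree_le_2[OF B, of v] D(1) that by auto
  moreover have "r \<in> D \<Longrightarrow> card (nbhd E r - D) < k"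
    using card_nbhd_diff_less_degree[OF G] root deg_r by fastforce
  ultimately obtain f' where "SE_coloring ((V - D) \<union> D) E k L f'" "\<forall>v\<in>V - D. f' v = f v"
    using SE_coloring_extend_full_block[OF G LA _ DV _ f D(2) h u(1,2)] by blast
  moreover have "(V - D) \<union> D = V" using DV by blast
  ultimately show ?thesis by auto
qed

lemma bug_core_partition:
  assumes core: "bug_core E S r g K" and S: "finite S" "k < card S" "card S \<le> 2 * k"
    and k: "3 \<le> k"
  obtains T D where "S = T \<union> D" "T \<inter> D = {}" "card T \<le> k" "card D = k" "g \<in> T" "K \<subseteq> D"
    "r \<in> T \<Longrightarrow> r = g"
proof -
  have K: "K \<subseteq> S" "g \<notin> K" "card K \<le> 3" "r = g \<or> r \<in> K" and gS: "g \<in> S"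
    using core unfolding bug_core_def hidden_def by auto
  have "card (S - K) = card S - card K" using S(1) K(1) by (simp add: card_Diff_subset finite_subset)
  then have "1 \<le> card S - k" "card S - k \<le> card (S - K)" using K(3) S(2) k by auto
  then obtain T where T: "g \<in> T" "T \<subseteq> S - K" "card T = card S - k"
    using obtain_subset_with_card_containing[of "S - K" g] S(1) gS K(2) by blast
  have "card (S - T) = k" using card_Diff_subset[of T S] T S(1,2) finite_subset[of T S] by auto
  moreover have "S = T \<union> (S - T)" "T \<inter> (S - T) = {}" "K \<subseteq> S - T" "card T \<le> k"
    using T K(1) S(3) by auto
  moreover have "r \<in> T \<Longrightarrow> r = g" using T(2) K(4) by blast
  ultimately show thesis using that[of T "S - T"] T(1) by blast
qed

theorem corollary4p3:
  fixes V :: "'a set" and E :: "'a \<Rightarrow> 'a \<Rightarrow> bool" and L :: "'a \<Rightarrow> 'c set"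
    and S :: "'a set" and r :: 'a and k :: nat
  assumes "k \<ge> 3"
    and "graph V E"
    and "list_assignment V k L"
    and "bug V E S r"
    and "degree E r \<le> k"
    and "k + 1 \<le> card S" and "card S \<le> 2 * k"
    and "\<exists>x\<in>S. \<exists>y\<in>S. x \<noteq> y \<and> \<not> E x y \<and> hidden E S x \<and> hidden E S y"
  shows "safe V E k L S"
  unfolding safe_def
proof (intro allI impI)
  fix f assume f: "SE_coloring (V - S) E k L f"
  note G = assms(2) and LA = assms(3) and B = assms(4)
  have SV: "S \<subseteq> V" using B unfolding bug_def by blast
  have "4 \<le> card S" using assms(1,6) by linarith
  then obtain g K where core: "bug_core E S r g K" using bug_core_exists[OF G B _ assms(8)] by blast
  have "finite S" "k < card S" using finite_subset[OF SV graph_finite[OF G]] assms(6) by auto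
  then obtain T D where TD: "S = T \<union> D" "T \<inter> D = {}" "card T \<le> k" "card D = k" "g \<in> T" "K \<subseteq> D"
    "r \<in> T \<Longrightarrow> r = g"
    using bug_core_partition[OF core _ _ assms(7,1)] by blast
  have "hidden E S g" "T \<subseteq> S" "(V - S) \<union> T = V - D" using core SV TD(1,2)
    unfolding bug_core_def by auto
  then obtain f1 where f1: "SE_coloring (V - D) E k L f1" "\<forall>v\<in>V - S. f1 v = f v"
    using bug_extend_to_part[OF G LA B _ TD(3,5) _ TD(7) f] by auto
  obtain f2 where "SE_coloring V E k L f2" "\<forall>v\<in>V - D. f2 v = f1 v"
    using bug_core_extend[OF G LA B assms(5) core _ TD(4,6) _ f1(1)] TD(1,2,5) by blast
  then show "\<exists>g. SE_coloring V E k L g \<and> (\<forall>v\<in>V - S. g v = f v)"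
    using f1(2) TD(1) by (intro exI[of _ f2]) auto
qed

end
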